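(* Let $\mathbf q=(r_1^{x_1})\in\mathbb Z_{\ge1}^{x_1}$, i.e. $\mathbf q$ consists of $x_1\ge1$ copies of a single positive integer $r_1$. If $\Delta_{(1,\mathbf q)}$ is reflexive and has the integer decomposition property, then $r_1=1$, i.e. $\mathbf q=(1,1,\dots,1)$.
   Context: For $\mathbf q=(q_1,\dots,q_n)\in\mathbb Z_{\ge1}^n$ with $q_1\le\cdots\le q_n$, let $\Delta_{(1,\mathbf q)}=\mathrm{conv}\{e_1,\dots,e_n,-\sum_{i=1}^n q_ie_i\}\subset\mathbb R^n$. A lattice polytope $P\subset\mathbb R^n$ has the integer decomposition property (IDP) if for every integer $m\ge1$, every point of $mP\cap\mathbb Z^n$ is a sum of $m$ points of $P\cap\mathbb Z^n$. A lattice polytope is reflexive if, after translation by an integer vector, the origin lies in its interior and its polar dual is also a lattice polytope; it is known that $\Delta_{(1,\mathbf q)}$ is reflexive if and only if $q_i$ divides $1+\sum_{j=1}^n q_j$ for every $i$. The notation $(r_1^{x_1})$ denotes the vector consisting of $x_1$ copies of $r_1$. *)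

theory Defs
  imports "HOL-Analysis.Analysis"
begin

definition lattice_points :: "(real ^ 'n) set" where
  "lattice_points = {x. \<forall>i. x $ i \<in> \<int>}"

definition lattice_polytope :: "(real ^ 'n) set \<Rightarrow> bool" where
  "lattice_polytope P \<longleftrightarrow> (\<exists>S. finite S \<and> S \<noteq> {} \<and> S \<subseteq> lattice_points \<and> P = convex hull S)"

definition polar_dual :: "(real ^ 'n) set \<Rightarrow> (real ^ 'n) set" where
  "polar_dual P = {y. \<forall>x\<in>P. x \<bullet> y \<le> 1}"

definition reflexive_polytope :: "(real ^ 'n) set \<Rightarrow> bool" where
  "reflexive_polytope P \<longleftrightarrow> lattice_polytope P \<and>
     (\<exists>t\<in>lattice_points. 0 \<in> interior ((\<lambda>x. x + t) ` P) \<and>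
        lattice_polytope (polar_dual ((\<lambda>x. x + t) ` P)))"

definition IDP :: "(real ^ 'n) set \<Rightarrow> bool" where
  "IDP P \<longleftrightarrow> (\<forall>m::nat. m \<ge> 1 \<longrightarrow>
     (\<forall>x \<in> ((\<lambda>y. real m *\<^sub>R y) ` P) \<inter> lattice_points.
        \<exists>ys. length ys = m \<and> set ys \<subseteq> P \<inter> lattice_points \<and> sum_list ys = x))"

definition Delta1q :: "('n::finite \<Rightarrow> nat) \<Rightarrow> (real ^ 'n) set" where
  "Delta1q q = convex hull (range (\<lambda>i. axis i 1) \<union> {- (\<chi> i. real (q i))})"

end

theory Submission
  imports Defs
begin

text \<open>Reflexivity of \<open>\<Delta> = \<Delta>\<^sub>(\<^sub>1\<^sub>,\<^sub>q\<^sub>)\<close> forces \<open>q\<^sub>j\<close> to divide \<open>1 + \<Sum>q\<close>. Let \<open>t\<close> be the lattice translation that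
  moves the origin into the interior and makes the polar dual a lattice polytope. The barycentric
  coordinates of the interior point \<open>-t\<close> are positive, which bounds every \<open>t\<^sub>i\<close> by \<open>1 + \<Sum>t\<close>.
  If \<open>\<Sum>t \<ge> 1\<close>, some integral linear functional attains a non-integral maximum over the dual,
  which is impossible for a lattice polytope; hence \<open>\<Sum>t = 0\<close>, and then \<open>t = 0\<close>. Over the dual
  of \<open>\<Delta>\<close> itself, \<open>-u\<^sub>j\<close> is maximal at the vertex dual to the facet opposite \<open>e\<^sub>j\<close>, where it
  equals \<open>(1 + \<Sum>q)/q\<^sub>j - 1\<close>; so this number is an integer. For \<open>q = (r, \<dots>, r)\<close> this says
  \<open>r dvd 1 + n r\<close>, so \<open>r = 1\<close>.\<close>

lemma inner_le_on_convex_hull: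
  fixes g :: "'a::real_inner"
  assumes "\<And>v. v \<in> V \<Longrightarrow> g \<bullet> v \<le> M" and "x \<in> convex hull V"
  shows "g \<bullet> x \<le> M"
proof -
  have "convex hull V \<subseteq> {x. g \<bullet> x \<le> M}"
    by (rule hull_minimal) (use assms(1) convex_halfspace_le in auto)
  with assms(2) show ?thesis by auto
qed

lemma interior_inner_less:
  fixes g :: "'a::euclidean_space"
  assumes "a \<in> interior S" and "\<And>x. x \<in> S \<Longrightarrow> g \<bullet> x \<le> M" and "g \<noteq> 0"
  shows "g \<bullet> a < M"
proof -
  have "interior S \<subseteq> interior {x. g \<bullet> x \<le> M}"
    using assms(2) by (intro interior_mono) auto
  with assms(1,3) show ?thesis by auto
qed

lemma zero_in_interior_translation_iff:
  fixes t :: "'a::real_normed_vector"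
  shows "0 \<in> interior ((\<lambda>x. x + t) ` S) \<longleftrightarrow> - t \<in> interior S"
proof -
  have "(\<lambda>x. x + t) ` S = (+) t ` S" by (simp add: add.commute)
  then show ?thesis
    by (simp add: interior_translation image_iff) (metis add.right_inverse minus_add_cancel)
qed

lemma inner_nonneg_combination_le:
  fixes a t u :: "real ^ 'n"
  assumes "\<And>i. 0 \<le> a $ i" and "\<And>i. u $ i + t \<bullet> u \<le> 1"
  shows "(a + (\<Sum>i\<in>UNIV. a $ i) *\<^sub>R t) \<bullet> u \<le> (\<Sum>i\<in>UNIV. a $ i)"
proof -
  have "(a + (\<Sum>i\<in>UNIV. a $ i) *\<^sub>R t) \<bullet> u = (\<Sum>i\<in>UNIV. a $ i * (u $ i + t \<bullet> u))"
    by (simp add: inner_add_left inner_vec_def[of a] distrib_left sum.distrib sum_distrib_right)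
  also have "\<dots> \<le> (\<Sum>i\<in>UNIV. a $ i * 1)"
    by (intro sum_mono mult_left_mono assms)
  finally show ?thesis
    by simp
qed

lemma inner_nonneg_combination_const_vec:
  fixes a t :: "real ^ 'n"
  assumes "1 + (\<Sum>i\<in>UNIV. t $ i) \<noteq> 0"
  shows "(a + (\<Sum>i\<in>UNIV. a $ i) *\<^sub>R t) \<bullet> (\<chi> i. 1 / (1 + (\<Sum>i\<in>UNIV. t $ i)))
    = (\<Sum>i\<in>UNIV. a $ i)"
proof -
  define d where "d = 1 + (\<Sum>i\<in>UNIV. t $ i)"
  have const_vec: "v \<bullet> (\<chi> i. 1 / d) = (\<Sum>i\<in>UNIV. v $ i) / d" for v :: "real ^ 'n"
    by (simp add: inner_vec_def sum_divide_distrib)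
  have "(a + (\<Sum>i\<in>UNIV. a $ i) *\<^sub>R t) \<bullet> (\<chi> i. 1 / d)
      = (\<Sum>i\<in>UNIV. a $ i) / d + (\<Sum>i\<in>UNIV. a $ i) * ((\<Sum>i\<in>UNIV. t $ i) / d)"
    by (simp add: const_vec sum.distrib sum_distrib_left add_divide_distrib)
  also have "\<dots> = (\<Sum>i\<in>UNIV. a $ i) * d / d"
    by (simp add: d_def algebra_simps add_divide_distrib)
  also have "\<dots> = (\<Sum>i\<in>UNIV. a $ i)"
    using assms by (simp add: d_def)
  finally show ?thesis
    unfolding d_def .
qed

lemma of_nat_divide_Ints_imp_dvd:
  assumes "real m / real n \<in> \<int>" and "n \<noteq> 0"
  shows "n dvd m"
proof -
  obtain k where "real m / real n = of_int k"
    using assms(1) Ints_cases by blast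
  then have "of_int (int m) = (of_int (k * int n) :: real)"
    using assms(2) by (simp add: field_simps)
  then have "int m = k * int n"
    by (simp only: of_int_eq_iff)
  then show ?thesis
    by (metis dvd_triv_right int_dvd_int_iff)
qed

lemma lattice_point_component_Ints:
  "t \<in> lattice_points \<Longrightarrow> t $ i \<in> \<int>"
  unfolding lattice_points_def by auto

lemma inner_lattice_points_Ints:
  fixes s c :: "real ^ 'n"
  assumes "s \<in> lattice_points" and "c \<in> lattice_points"
  shows "s \<bullet> c \<in> \<int>"
  using assms unfolding lattice_points_def inner_vec_def
  by (auto intro!: Ints_sum Ints_mult)

lemma lattice_polytope_support_Ints:
  fixes c y :: "real ^ 'n"
  assumes "lattice_polytope D" and "c \<in> lattice_points"
    and "\<And>u. u \<in> D \<Longrightarrow> c \<bullet> u \<le> c \<bullet> y" and "y \<in> D"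
  shows "c \<bullet> y \<in> \<int>"
proof -
  obtain S where S: "S \<subseteq> lattice_points" "D = convex hull S"
    using assms(1) unfolding lattice_polytope_def by auto
  have "c \<bullet> s \<le> of_int \<lfloor>c \<bullet> y\<rfloor>" if "s \<in> S" for s
  proof -
    have "c \<bullet> s \<le> c \<bullet> y"
      using assms(3) S(2) hull_inc[OF that] by auto
    moreover have "c \<bullet> s \<in> \<int>"
      using inner_lattice_points_Ints[OF assms(2)] S(1) that by auto
    ultimately show ?thesis
      by (auto elim!: Ints_cases simp: le_floor_iff)
  qed
  then have "c \<bullet> y \<le> of_int \<lfloor>c \<bullet> y\<rfloor>"
    using assms(4) S(2) by (auto intro: inner_le_on_convex_hull)
  then have "c \<bullet> y = of_int \<lfloor>c \<bullet> y\<rfloor>"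
    using of_int_floor_le[of "c \<bullet> y"] by linarith
  then show ?thesis
    by (metis Ints_of_int)
qed

lemma polar_dual_translation_convex_hull:
  "y \<in> polar_dual ((\<lambda>x. x + t) ` (convex hull V)) \<longleftrightarrow> (\<forall>v\<in>V. (v + t) \<bullet> y \<le> 1)"
proof -
  have shift: "(x + t) \<bullet> y \<le> 1 \<longleftrightarrow> y \<bullet> x \<le> 1 - t \<bullet> y" for x
    by (simp add: inner_add_left inner_commute[of x y] le_diff_eq)
  have "(\<forall>x\<in>convex hull V. y \<bullet> x \<le> 1 - t \<bullet> y) \<longleftrightarrow> (\<forall>v\<in>V. y \<bullet> v \<le> 1 - t \<bullet> y)"
    by (auto intro: hull_inc inner_le_on_convex_hull)
  then show ?thesis
    unfolding polar_dual_def mem_Collect_eq ball_simps shift .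
qed

lemma polar_dual_translation_Delta1q_iff:
  "y \<in> polar_dual ((\<lambda>x. x + t) ` Delta1q q) \<longleftrightarrow>
     (\<forall>i. y $ i + t \<bullet> y \<le> 1) \<and> t \<bullet> y - (\<Sum>i\<in>UNIV. real (q i) * y $ i) \<le> 1"
proof -
  have "(- (\<chi> i. real (q i)) + t) \<bullet> y = t \<bullet> y - (\<Sum>i\<in>UNIV. real (q i) * y $ i)"
    by (simp add: inner_add_left inner_vec_def sum_negf left_diff_distrib sum_subtractf)
  moreover have "(axis i 1 + t) \<bullet> y = y $ i + t \<bullet> y" for i
    by (simp add: inner_add_left inner_axis')
  ultimately show ?thesis
    unfolding Delta1q_def polar_dual_translation_convex_hull ball_Un by auto
qed

lemma polar_dual_Delta1q_iff:
  "u \<in> polar_dual (Delta1q q) \<longleftrightarrow> (\<forall>i. u $ i \<le> 1) \<and> - (\<Sum>i\<in>UNIV. real (q i) * u $ i) \<le> 1"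
  using polar_dual_translation_Delta1q_iff[of u 0 q] by simp

lemma Delta1q_inner_le:
  assumes "\<And>i. g $ i \<le> M" and "- (\<Sum>i\<in>UNIV. real (q i) * g $ i) \<le> M"
    and "x \<in> Delta1q q"
  shows "g \<bullet> x \<le> M"
proof -
  have "g \<bullet> v \<le> M" if "v \<in> range (\<lambda>i. axis i 1) \<union> {- (\<chi> i. real (q i))}" for v
  proof -
    have "g \<bullet> - (\<chi> i. real (q i)) = - (\<Sum>i\<in>UNIV. real (q i) * g $ i)"
      by (simp add: inner_vec_def sum_negf mult.commute)
    then show ?thesis
      using that assms(1,2) by (auto simp: inner_axis)
  qed
  then show ?thesis
    using assms(3) unfolding Delta1q_def by (rule inner_le_on_convex_hull)
qed

lemma interior_translation_Delta1q_sum_gt: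
  fixes t :: "real ^ 'n"
  assumes "0 \<in> interior ((\<lambda>x. x + t) ` Delta1q q)"
  shows "- 1 < (\<Sum>i\<in>UNIV. t $ i)"
proof -
  have "((\<chi> i. 1) :: real ^ 'n) \<bullet> (- t) < 1"
  proof (rule interior_inner_less)
    show "- t \<in> interior (Delta1q q)"
      using assms zero_in_interior_translation_iff by blast
    have "0 \<le> (\<Sum>i\<in>UNIV. real (q i))"
      by (simp add: sum_nonneg)
    then show "(\<chi> i. 1) \<bullet> x \<le> 1" if "x \<in> Delta1q q" for x
      by (intro Delta1q_inner_le[OF _ _ that]) simp_all
    show "((\<chi> i. 1) :: real ^ 'n) \<noteq> 0"
      by (simp add: vec_eq_iff)
  qed
  then show ?thesis
    by (simp add: inner_vec_def sum_negf)
qed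

lemma interior_translation_Delta1q_coordinate_lt:
  fixes t :: "real ^ 'n" and q :: "'n \<Rightarrow> nat"
  assumes "0 \<in> interior ((\<lambda>x. x + t) ` Delta1q q)"
  shows "(1 + real (sum q UNIV)) * t $ j < real (q j) * (1 + (\<Sum>i\<in>UNIV. t $ i))"
proof -
  define Q where "Q = real (sum q UNIV)"
  \<comment> \<open>\<open>g \<bullet> x \<le> q\<^sub>j\<close> on \<open>\<Delta>\<close> says that the barycentric coordinate of \<open>e\<^sub>j\<close>, scaled by \<open>1 + Q\<close>, is nonnegative.\<close>
  define g :: "real ^ 'n" where "g = (\<chi> i. real (q j) - (if i = j then 1 + Q else 0))"
  have "q j \<le> sum q UNIV"
    by (simp add: member_le_sum)
  then have "real (q j) \<le> Q"
    unfolding Q_def by linarith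
  have "0 \<le> Q"
    unfolding Q_def by (simp add: sum_nonneg)
  have "g \<bullet> (- t) < real (q j)"
  proof (rule interior_inner_less)
    show "- t \<in> interior (Delta1q q)"
      using assms zero_in_interior_translation_iff by blast
    have "(\<Sum>i\<in>UNIV. real (q i) * g $ i)
        = (\<Sum>i\<in>UNIV. real (q j) * real (q i) - (if i = j then (1 + Q) * real (q j) else 0))"
      by (rule sum.cong) (auto simp: g_def algebra_simps)
    also have "\<dots> = real (q j) * Q - (1 + Q) * real (q j)"
      by (simp add: sum_subtractf sum_distrib_left Q_def)
    finally have "(\<Sum>i\<in>UNIV. real (q i) * g $ i) = real (q j) * Q - (1 + Q) * real (q j)" .
    then show "g \<bullet> x \<le> real (q j)" if "x \<in> Delta1q q" for x
      by (intro Delta1q_inner_le[OF _ _ that]) (use \<open>0 \<le> Q\<close> in \<open>auto simp: g_def algebra_simps\<close>)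
    show "g \<noteq> 0"
      using \<open>real (q j) \<le> Q\<close> by (auto simp: vec_eq_iff g_def intro!: exI[of _ j])
  qed
  moreover have "g \<bullet> (- t) = (1 + Q) * t $ j - real (q j) * (\<Sum>i\<in>UNIV. t $ i)"
  proof -
    have "g \<bullet> (- t) = (\<Sum>i\<in>UNIV. (if i = j then (1 + Q) * t $ i else 0) - real (q j) * t $ i)"
      unfolding inner_vec_def by (rule sum.cong) (auto simp: g_def algebra_simps)
    then show ?thesis
      by (simp add: sum_subtractf sum_distrib_left)
  qed
  ultimately show ?thesis
    unfolding Q_def by (simp add: algebra_simps)
qed

lemma interior_translation_Delta1q_coordinate_lt_sum:
  fixes t :: "real ^ 'n" and q :: "'n \<Rightarrow> nat"
  assumes "0 \<in> interior ((\<lambda>x. x + t) ` Delta1q q)"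
  shows "t $ i < 1 + (\<Sum>i\<in>UNIV. t $ i)"
proof -
  define Q where "Q = real (sum q UNIV)"
  define d where "d = 1 + (\<Sum>i\<in>UNIV. t $ i)"
  have "0 < d"
    unfolding d_def using interior_translation_Delta1q_sum_gt[OF assms] by linarith
  have "0 \<le> Q"
    unfolding Q_def by (rule of_nat_0_le_iff)
  have "real (q i) \<le> Q"
    unfolding Q_def by (rule of_nat_mono) (simp add: member_le_sum)
  then have "real (q i) * d < (1 + Q) * d"
    using \<open>0 < d\<close> by (intro mult_strict_right_mono) auto
  then have "(1 + Q) * t $ i < (1 + Q) * d"
    using interior_translation_Delta1q_coordinate_lt[OF assms, of i]
    unfolding Q_def d_def by linarith
  then show ?thesis
    unfolding d_def by (rule mult_left_less_imp_less) (use \<open>0 \<le> Q\<close> in linarith)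
qed

lemma const_vec_in_polar_dual_translation_Delta1q:
  fixes t :: "real ^ 'n"
  assumes "0 < 1 + (\<Sum>i\<in>UNIV. t $ i)"
  shows "(\<chi> i. 1 / (1 + (\<Sum>i\<in>UNIV. t $ i))) \<in> polar_dual ((\<lambda>x. x + t) ` Delta1q q)"
proof -
  define s where "s = (\<Sum>i\<in>UNIV. t $ i)"
  define y :: "real ^ 'n" where "y = (\<chi> i. 1 / (1 + s))"
  have t_y: "t \<bullet> y = s / (1 + s)"
    by (simp add: y_def inner_vec_def s_def sum_divide_distrib)
  have "y \<in> polar_dual ((\<lambda>x. x + t) ` Delta1q q)"
    unfolding polar_dual_translation_Delta1q_iff
  proof
    have "1 / (1 + s) + s / (1 + s) = 1"
      using assms by (simp add: s_def add_divide_distrib[symmetric])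
    then show "\<forall>i. y $ i + t \<bullet> y \<le> 1"
      unfolding t_y by (simp add: y_def)
    have "0 \<le> (\<Sum>i\<in>UNIV. real (q i) * y $ i)"
      using assms by (simp add: y_def s_def sum_nonneg)
    moreover have "s / (1 + s) \<le> 1"
      using assms by (simp add: s_def)
    ultimately show "t \<bullet> y - (\<Sum>i\<in>UNIV. real (q i) * y $ i) \<le> 1"
      using t_y by linarith
  qed
  then show ?thesis
    unfolding y_def s_def .
qed

text \<open>If \<open>d = 1 + \<Sum>t \<ge> 2\<close>, the dual vertex \<open>y = (1/d, \<dots>, 1/d)\<close> maximises over the dual the
  integral functional \<open>c = a + (\<Sum>a) t\<close>, where \<open>a\<^sub>i = 1 - t\<^sub>i/d \<ge> 0\<close>, yet
  \<open>c \<bullet> y = \<Sum>a = n - 1 + 1/d\<close> is not an integer.\<close>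
lemma reflexive_translation_Delta1q_sum_eq_0:
  fixes t :: "real ^ 'n"
  assumes t: "t \<in> lattice_points"
    and interior: "0 \<in> interior ((\<lambda>x. x + t) ` Delta1q q)"
    and dual: "lattice_polytope (polar_dual ((\<lambda>x. x + t) ` Delta1q q))"
  shows "(\<Sum>i\<in>UNIV. t $ i) = 0"
proof (rule ccontr)
  define d where "d = 1 + (\<Sum>i\<in>UNIV. t $ i)"
  define N where "N = real CARD('n)"
  assume "(\<Sum>i\<in>UNIV. t $ i) \<noteq> 0"
  moreover have "(\<Sum>i\<in>UNIV. t $ i) \<in> \<int>"
    using t by (auto intro: Ints_sum lattice_point_component_Ints)
  moreover have "- 1 < (\<Sum>i\<in>UNIV. t $ i)"
    using interior by (rule interior_translation_Delta1q_sum_gt)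
  ultimately have "2 \<le> d"
    unfolding d_def by (auto elim!: Ints_cases)
  define a :: "real ^ 'n" where "a = (\<chi> i. 1 - t $ i / d)"
  define c where "c = a + (\<Sum>i\<in>UNIV. a $ i) *\<^sub>R t"
  have a_nonneg: "0 \<le> a $ i" for i
    using interior_translation_Delta1q_coordinate_lt_sum[OF interior, of i] \<open>2 \<le> d\<close>
    by (simp add: a_def d_def)
  have sum_a: "(\<Sum>i\<in>UNIV. a $ i) = N - 1 + 1 / d"
    using \<open>2 \<le> d\<close>
    by (simp add: a_def N_def sum_subtractf sum_divide_distrib[symmetric] d_def field_simps)
  have "c $ i = 1 + (N - 1) * t $ i" for i
  proof -
    have "c $ i = a $ i + (N - 1 + 1 / d) * t $ i"
      by (simp add: c_def sum_a)
    also have "\<dots> = 1 + (N - 1) * t $ i"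
      using \<open>2 \<le> d\<close> by (simp add: a_def field_simps)
    finally show ?thesis .
  qed
  then have "c \<in> lattice_points"
    unfolding lattice_points_def N_def
    by (auto intro!: Ints_add Ints_mult Ints_diff lattice_point_component_Ints[OF t])
  moreover have "c \<bullet> u \<le> (\<Sum>i\<in>UNIV. a $ i)" if "u \<in> polar_dual ((\<lambda>x. x + t) ` Delta1q q)" for u
    using that a_nonneg unfolding c_def polar_dual_translation_Delta1q_iff
    by (intro inner_nonneg_combination_le) auto
  moreover have "c \<bullet> (\<chi> i. 1 / d) = (\<Sum>i\<in>UNIV. a $ i)"
    using \<open>2 \<le> d\<close> unfolding c_def d_def by (intro inner_nonneg_combination_const_vec) simp
  moreover have "(\<chi> i. 1 / d) \<in> polar_dual ((\<lambda>x. x + t) ` Delta1q q)"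
    using \<open>2 \<le> d\<close> unfolding d_def by (intro const_vec_in_polar_dual_translation_Delta1q) simp
  ultimately have "N - 1 + 1 / d \<in> \<int>"
    using lattice_polytope_support_Ints[OF dual] sum_a by metis
  then have "1 / d \<in> \<int>"
    using Ints_diff[of "N - 1 + 1 / d" "N - 1"] by (simp add: N_def)
  moreover have "0 < 1 / d" and "1 / d < 1"
    using \<open>2 \<le> d\<close> by simp_all
  ultimately show False
    using Ints_nonzero_abs_ge1[of "1 / d"] by simp
qed

lemma reflexive_translation_Delta1q_eq_0:
  fixes t :: "real ^ 'n"
  assumes t: "t \<in> lattice_points"
    and interior: "0 \<in> interior ((\<lambda>x. x + t) ` Delta1q q)"
    and dual: "lattice_polytope (polar_dual ((\<lambda>x. x + t) ` Delta1q q))"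
  shows "t = 0"
proof -
  have sum_0: "(\<Sum>i\<in>UNIV. t $ i) = 0"
    using t interior dual by (rule reflexive_translation_Delta1q_sum_eq_0)
  have "t $ i \<le> 0" for i
    using interior_translation_Delta1q_coordinate_lt_sum[OF interior, of i]
      lattice_point_component_Ints[OF t, of i]
    unfolding sum_0 by (auto elim!: Ints_cases)
  then have "\<forall>i\<in>UNIV. - t $ i = 0"
    using sum_0 sum_nonneg_eq_0_iff[of UNIV "\<lambda>i. - t $ i"] by (simp add: sum_negf)
  then show ?thesis
    by (simp add: vec_eq_iff)
qed

lemma polar_dual_Delta1q_coordinate_ge:
  fixes q :: "'n::finite \<Rightarrow> nat"
  assumes "1 \<le> q j" and "u \<in> polar_dual (Delta1q q)"
  shows "1 - (1 + real (sum q UNIV)) / real (q j) \<le> u $ j"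
proof -
  define Q where "Q = real (sum q UNIV)"
  have "(\<Sum>i\<in>UNIV - {j}. real (q i) * u $ i) \<le> (\<Sum>i\<in>UNIV - {j}. real (q i))"
    using assms(2) unfolding polar_dual_Delta1q_iff by (intro sum_mono) (simp add: mult_left_le)
  also have "\<dots> = Q - real (q j)"
    unfolding Q_def of_nat_sum by (simp add: sum.remove[of UNIV j "\<lambda>i. real (q i)"])
  finally have "- 1 \<le> real (q j) * u $ j + (Q - real (q j))"
    using assms(2) unfolding polar_dual_Delta1q_iff
    by (simp add: sum.remove[of UNIV j "\<lambda>i. real (q i) * u $ i"])
  then have "(1 + Q - real (q j)) / real (q j) \<ge> - u $ j"
    using assms(1) by (simp add: pos_le_divide_eq algebra_simps)
  moreover have "(1 + Q - real (q j)) / real (q j) = (1 + Q) / real (q j) - 1"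
    using assms(1) by (simp add: diff_divide_distrib)
  ultimately show ?thesis
    unfolding Q_def by linarith
qed

lemma Delta1q_facet_vertex_in_polar_dual:
  fixes q :: "'n::finite \<Rightarrow> nat"
  assumes "1 \<le> q j"
  shows "(\<chi> i. if i = j then 1 - (1 + real (sum q UNIV)) / real (q j) else 1)
    \<in> polar_dual (Delta1q q)"
    (is "?y \<in> _")
  unfolding polar_dual_Delta1q_iff
proof
  show "\<forall>i. ?y $ i \<le> 1"
    using assms by (simp add: add_nonneg_nonneg sum_nonneg)
  have "(\<Sum>i\<in>UNIV. real (q i) * ?y $ i)
      = real (q j) * ?y $ j + (\<Sum>i\<in>UNIV - {j}. real (q i))"
    by (simp add: sum.remove[of UNIV j])
  also have "\<dots> = - 1"
    using assms by (simp add: sum.remove[of UNIV j q] right_diff_distrib)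
  finally show "- (\<Sum>i\<in>UNIV. real (q i) * ?y $ i) \<le> 1"
    by simp
qed

lemma lattice_polar_dual_Delta1q_dvd:
  fixes q :: "'n::finite \<Rightarrow> nat"
  assumes "1 \<le> q j" and dual: "lattice_polytope (polar_dual (Delta1q q))"
  shows "q j dvd 1 + sum q UNIV"
proof -
  define y :: "real ^ 'n"
    where "y = (\<chi> i. if i = j then 1 - (1 + real (sum q UNIV)) / real (q j) else 1)"
  have "- axis j 1 \<in> lattice_points"
    by (simp add: lattice_points_def axis_def)
  moreover have "(- axis j 1) \<bullet> u \<le> (- axis j 1) \<bullet> y" if "u \<in> polar_dual (Delta1q q)" for u
    using polar_dual_Delta1q_coordinate_ge[OF assms(1) that] by (simp add: inner_axis' y_def)
  moreover have "y \<in> polar_dual (Delta1q q)"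
    unfolding y_def using assms(1) by (rule Delta1q_facet_vertex_in_polar_dual)
  ultimately have "(- axis j 1) \<bullet> y \<in> \<int>"
    by (rule lattice_polytope_support_Ints[OF dual])
  then have "(1 + real (sum q UNIV)) / real (q j) - 1 + 1 \<in> \<int>"
    by (intro Ints_add) (simp_all add: inner_axis' y_def)
  then show ?thesis
    using assms(1) by (intro of_nat_divide_Ints_imp_dvd) simp_all
qed

lemma reflexive_Delta1q_dvd:
  fixes q :: "'n::finite \<Rightarrow> nat"
  assumes "1 \<le> q j" and "reflexive_polytope (Delta1q q)"
  shows "q j dvd 1 + sum q UNIV"
proof -
  obtain t where t: "t \<in> lattice_points"
    and interior: "0 \<in> interior ((\<lambda>x. x + t) ` Delta1q q)"
    and dual: "lattice_polytope (polar_dual ((\<lambda>x. x + t) ` Delta1q q))"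
    using assms(2) unfolding reflexive_polytope_def by blast
  have "t = 0"
    using t interior dual by (rule reflexive_translation_Delta1q_eq_0)
  with dual have "lattice_polytope (polar_dual (Delta1q q))"
    by simp
  with assms(1) show ?thesis
    by (rule lattice_polar_dual_Delta1q_dvd)
qed

theorem proposition3p4:
  fixes r1 :: nat
  assumes "r1 \<ge> 1"
    and "reflexive_polytope (Delta1q ((\<lambda>_. r1) :: 'n::finite \<Rightarrow> nat))"
    and "IDP (Delta1q ((\<lambda>_. r1) :: 'n::finite \<Rightarrow> nat))"
  shows "r1 = 1"
proof -
  obtain j :: 'n where True
    by blast
  have "r1 dvd 1 + CARD('n) * r1"
    using reflexive_Delta1q_dvd[of "\<lambda>_. r1" j] assms(1,2) by simp
  then have "r1 dvd 1"
    by (simp only: dvd_add_times_triv_right_iff)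
  then show ?thesis
    by simp
qed

end
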